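(* Two epistemic logic programs $\Pi_1$ and $\Pi_2$ are strongly equivalent (in any of the four senses: strongly ELP-WV-, ASP-WV-, ELP-CWV- or ASP-CWV-equivalent) if and only if they have the same SE-function, i.e. $\mathcal{SE}_{\Pi_1}=\mathcal{SE}_{\Pi_2}$.
   Context: A literal over a set of atoms $\mathcal{A}$ is an atom $a$ or $\neg a$. An interpretation is $I\subseteq\mathcal{A}$; $I\models a$ iff $a\in I$, $I\models\neg\ell$ iff $I\not\models\ell$. A (plain) logic program $(\mathcal{A},\mathcal{R})$ has rules $a_1\vee\cdots\vee a_l \leftarrow a_{l+1},\ldots,a_m,\neg\ell_1,\ldots,\neg\ell_n$ ($\ell_i$ literals); $H(r)$ head, $B(r)$ body, $B^+(r)=\{a_{l+1},\ldots,a_m\}$; $M\models r$ iff $M\models B(r)$ implies $M\cap H(r)\neq\emptyset$; $\mathrm{Mods}(\Pi)$ is the set of models. GL-reduct: $\Pi^I=(\mathcal{A},\{H(r)\leftarrow B^+(r)\mid r\in\mathcal{R},\ I\models\neg\ell\ \forall\neg\ell\in B(r)\})$. Answer set: model $M$ of $\Pi$ such that no $M'\subset M$ is a model of $\Pi^M$; $AS(\Pi)$ the set of answer sets ($\neg\neg\neg a$ treated as $\neg a$). An SE-model of $\Pi$ is $(X,Y)$ with $X\subseteq Y\subseteq\mathcal{A}$, $Y\models\Pi$, $X\models\Pi^Y$; $\mathrm{SE}(\Pi)$ the set of SE-models. An ELP is $(\mathcal{A},\mathcal{E},\mathcal{R})$ with $\mathcal{E}$ a set of epistemic literals $\mathbf{not}\,\ell$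 and rules $a_1\vee\cdots\vee a_k\leftarrow \ell_1,\ldots,\ell_m,\xi_1,\ldots,\xi_j,\neg\xi_{j+1},\ldots,\neg\xi_n$, $\xi_i\in\mathcal{E}$. Union of ELPs is componentwise; a plain logic program is an ELP with no epistemic literals. A guess is $\Phi\subseteq\mathcal{E}$; $\mathcal{I}$ is $\Phi$-compatible w.r.t. $\mathcal{E}$ iff $\mathcal{I}\neq\emptyset$, every $\mathbf{not}\,\ell\in\Phi$ has some $I\in\mathcal{I}$ with $I\not\models\ell$, and every $\mathbf{not}\,\ell\in\mathcal{E}\setminus\Phi$ has $I\models\ell$ for all $I\in\mathcal{I}$. The epistemic reduct $\Pi^\Phi=(\mathcal{A},\mathcal{R}^\Phi)$ replaces each $\mathbf{not}\,\ell\in\Phi$ by $\top$ and every other $\mathbf{not}$ by $\neg$. A candidate world view (CWV) of $\Pi$ is $\mathcal{M}=AS(\Pi^\Phi)$ that is $\Phi$-compatible w.r.t. $\mathcal{E}$, for some guess $\Phi$; a world view (WV) is a CWV whose associated guess is subset-maximal among associated guesses of CWVs. CWV-/WV-equivalence means equal sets of CWVs/WVs. Strong ELP-(C)WV-equivalence of $\Pi_1,\Pi_2$: for every ELP $\Pi$, $\Pi_1\cup\Pi$ and $\Pi_2\cup\Pi$ are (C)WV-equivalent; strong ASP-(C)WV-equivalence: the same for every plain logic program $\Pi$. $\Phi$ is realizable in $\Pi$ iff some subset of $\mathrm{Mods}(\Pi^\Phi)$ is $\Phi$-compatible w.r.t. $\mathcal{E}$. SE-function: $\mathcal{SE}_\Pi(\Phi)=\mathrm{SE}(\Pi^\Phi)$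 if $\Phi$ is realizable in $\Pi$, else $\emptyset$. *)

theory Defs
  imports Main
begin

datatype 'a lit = PosL 'a | NegL 'a

fun lit_atom :: "'a lit \<Rightarrow> 'a" where
  "lit_atom (PosL a) = a" | "lit_atom (NegL a) = a"

text \<open>Ordinary (non-epistemic) body elements of a rule:
  a positive atom a, or a negated literal (neg a, or neg neg a).\<close>
datatype 'a bodyel = BAtom 'a | BNot "'a lit"

fun bodyel_atom :: "'a bodyel \<Rightarrow> 'a" where
  "bodyel_atom (BAtom a) = a" | "bodyel_atom (BNot l) = lit_atom l"

text \<open>An epistemic literal (not l) is represented by the literal l.
  epos = epistemic literals xi occurring positively, eneg = those occurring as neg xi.\<close>
record 'a rule =
  head :: "'a set"
  body :: "'a bodyel set"
  epos :: "'a lit set"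
  eneg :: "'a lit set"

record 'a elp =
  atoms :: "'a set"
  elits :: "'a lit set"
  rules :: "'a rule set"

definition wf_elp :: "'a elp \<Rightarrow> bool" where
  "wf_elp P \<longleftrightarrow> finite (atoms P)
     \<and> (\<forall>l\<in>elits P. lit_atom l \<in> atoms P)
     \<and> (\<forall>r\<in>rules P. head r \<subseteq> atoms P \<and> bodyel_atom ` body r \<subseteq> atoms P
                     \<and> epos r \<subseteq> elits P \<and> eneg r \<subseteq> elits P)"

definition plain :: "'a elp \<Rightarrow> bool" where
  "plain P \<longleftrightarrow> elits P = {}"

definition elp_union :: "'a elp \<Rightarrow> 'a elp \<Rightarrow> 'a elp" where
  "elp_union P Q = \<lparr>atoms = atoms P \<union> atoms Q, elits = elits P \<union> elits Q,
                    rules = rules P \<union> rules Q\<rparr>"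

fun sat_lit :: "'a set \<Rightarrow> 'a lit \<Rightarrow> bool" where
  "sat_lit I (PosL a) \<longleftrightarrow> a \<in> I"
| "sat_lit I (NegL a) \<longleftrightarrow> a \<notin> I"

fun sat_bodyel :: "'a set \<Rightarrow> 'a bodyel \<Rightarrow> bool" where
  "sat_bodyel I (BAtom a) \<longleftrightarrow> a \<in> I"
| "sat_bodyel I (BNot l) \<longleftrightarrow> \<not> sat_lit I l"

definition sat_rule :: "'a set \<Rightarrow> 'a rule \<Rightarrow> bool" where
  "sat_rule M r \<longleftrightarrow> ((\<forall>b\<in>body r. sat_bodyel M b) \<longrightarrow> head r \<inter> M \<noteq> {})"

definition Mods :: "'a elp \<Rightarrow> 'a set set" where
  "Mods P = {M. M \<subseteq> atoms P \<and> (\<forall>r\<in>rules P. sat_rule M r)}"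

definition pos_body :: "'a rule \<Rightarrow> 'a set" where
  "pos_body r = {a. BAtom a \<in> body r}"

definition gl_reduct :: "'a elp \<Rightarrow> 'a set \<Rightarrow> 'a elp" where
  "gl_reduct P I = P\<lparr>rules :=
     {\<lparr>head = head r, body = BAtom ` pos_body r, epos = {}, eneg = {}\<rparr> | r.
        r \<in> rules P \<and> (\<forall>l. BNot l \<in> body r \<longrightarrow> \<not> sat_lit I l)}\<rparr>"

definition AS :: "'a elp \<Rightarrow> 'a set set" where
  "AS P = {M \<in> Mods P. \<not> (\<exists>M'. M' \<subset> M \<and> M' \<in> Mods (gl_reduct P M))}"

definition SE :: "'a elp \<Rightarrow> ('a set \<times> 'a set) set" where
  "SE P = {(X, Y). X \<subseteq> Y \<and> Y \<subseteq> atoms P \<and> Y \<in> Mods P \<and> X \<in> Mods (gl_reduct P Y)}"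

text \<open>neg neg l, with neg neg neg a treated as neg a.\<close>
fun dneg :: "'a lit \<Rightarrow> 'a bodyel" where
  "dneg (PosL a) = BNot (NegL a)"
| "dneg (NegL a) = BNot (PosL a)"

definition compatible :: "'a lit set \<Rightarrow> 'a lit set \<Rightarrow> 'a set set \<Rightarrow> bool" where
  "compatible E \<Phi> \<I> \<longleftrightarrow> \<I> \<noteq> {}
     \<and> (\<forall>l\<in>\<Phi>. \<exists>I\<in>\<I>. \<not> sat_lit I l)
     \<and> (\<forall>l\<in>E - \<Phi>. \<forall>I\<in>\<I>. sat_lit I l)"

text \<open>Epistemic reduct: (not l) in Phi becomes true (so neg(not l) becomes false and
  the rule is dropped); every other (not l) becomes neg l, and neg(not l) becomes neg neg l.\<close>
definition epi_reduct :: "'a elp \<Rightarrow> 'a lit set \<Rightarrow> 'a elp" where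
  "epi_reduct P \<Phi> = \<lparr>atoms = atoms P, elits = {}, rules =
     {\<lparr>head = head r, body = body r \<union> BNot ` (epos r - \<Phi>) \<union> dneg ` eneg r,
       epos = {}, eneg = {}\<rparr> | r. r \<in> rules P \<and> eneg r \<inter> \<Phi> = {}}\<rparr>"

definition cwv_guess :: "'a elp \<Rightarrow> 'a lit set \<Rightarrow> bool" where
  "cwv_guess P \<Phi> \<longleftrightarrow> \<Phi> \<subseteq> elits P \<and> compatible (elits P) \<Phi> (AS (epi_reduct P \<Phi>))"

definition CWVs :: "'a elp \<Rightarrow> 'a set set set" where
  "CWVs P = {\<M>. \<exists>\<Phi>. cwv_guess P \<Phi> \<and> \<M> = AS (epi_reduct P \<Phi>)}"

definition WVs :: "'a elp \<Rightarrow> 'a set set set" where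
  "WVs P = {\<M>. \<exists>\<Phi>. cwv_guess P \<Phi> \<and> \<M> = AS (epi_reduct P \<Phi>)
                    \<and> \<not> (\<exists>\<Psi>. cwv_guess P \<Psi> \<and> \<Phi> \<subset> \<Psi>)}"

definition strong_ELP_WV_eq :: "'a elp \<Rightarrow> 'a elp \<Rightarrow> bool" where
  "strong_ELP_WV_eq P1 P2 \<longleftrightarrow>
     (\<forall>P. wf_elp P \<longrightarrow> WVs (elp_union P1 P) = WVs (elp_union P2 P))"

definition strong_ASP_WV_eq :: "'a elp \<Rightarrow> 'a elp \<Rightarrow> bool" where
  "strong_ASP_WV_eq P1 P2 \<longleftrightarrow>
     (\<forall>P. wf_elp P \<and> plain P \<longrightarrow> WVs (elp_union P1 P) = WVs (elp_union P2 P))"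

definition strong_ELP_CWV_eq :: "'a elp \<Rightarrow> 'a elp \<Rightarrow> bool" where
  "strong_ELP_CWV_eq P1 P2 \<longleftrightarrow>
     (\<forall>P. wf_elp P \<longrightarrow> CWVs (elp_union P1 P) = CWVs (elp_union P2 P))"

definition strong_ASP_CWV_eq :: "'a elp \<Rightarrow> 'a elp \<Rightarrow> bool" where
  "strong_ASP_CWV_eq P1 P2 \<longleftrightarrow>
     (\<forall>P. wf_elp P \<and> plain P \<longrightarrow> CWVs (elp_union P1 P) = CWVs (elp_union P2 P))"

definition realizable :: "'a elp \<Rightarrow> 'a lit set \<Rightarrow> bool" where
  "realizable P \<Phi> \<longleftrightarrow> (\<exists>\<I>. \<I> \<subseteq> Mods (epi_reduct P \<Phi>) \<and> compatible (elits P) \<Phi> \<I>)"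

definition SE_fun :: "'a elp \<Rightarrow> 'a lit set \<Rightarrow> ('a set \<times> 'a set) set" where
  "SE_fun P \<Phi> = (if realizable P \<Phi> then SE (epi_reduct P \<Phi>) else {})"

definition same_SE_fun :: "'a elp \<Rightarrow> 'a elp \<Rightarrow> bool" where
  "same_SE_fun P1 P2 \<longleftrightarrow> elits P1 = elits P2 \<and>
     (\<forall>\<Phi>. \<Phi> \<subseteq> elits P1 \<longrightarrow> SE_fun P1 \<Phi> = SE_fun P2 \<Phi>)"

end

(*
  If P1 and P2 have the same SE-function, let \<Phi> be the guess of a candidate world view of
  P1 \<union> P for some context P.  Restricting its answer sets to the atoms of P1 realizes
  \<Phi> (cut down to the epistemic literals of P1) in P1, so the epistemic reducts of P1 and P2
  under \<Phi> have the same SE-models.  By the SE-model characterisation of strong equivalence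
  the reducts of P1 \<union> P and P2 \<union> P then have the same answer sets; hence both unions have
  the same guesses with the same candidate world views, and the same world views.

  Conversely, suppose the SE-functions differ at \<Phi>: say (X, Y) is an SE-model of the reduct
  of P1 but not of that of P2, and a family W of models realizes \<Phi>.  A plain program over
  one fresh atom f K per candidate K in W \<union> {Y} makes K \<union> {f K} an answer set of the
  union with a reduct Q exactly when (K, K) is an SE-model of Q and, unless B K = K,
  (B K, K) is not, where B replaces Y by X.  For one of the two programs these answer sets form a world view with guess
  \<Phi>, which is not even a candidate world view of the other one.  The fresh atoms are where
  the infinitude of the atom type is used.
*)
theory Submission
  imports Defs
begin

definition neg_body_sat :: "'a set \<Rightarrow> 'a rule \<Rightarrow> bool" where
  "neg_body_sat I r \<longleftrightarrow> (\<forall>l. BNot l \<in> body r \<longrightarrow> \<not> sat_lit I l)"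

definition pos_rule :: "'a rule \<Rightarrow> 'a rule" where
  "pos_rule r = \<lparr>head = head r, body = BAtom ` pos_body r, epos = {}, eneg = {}\<rparr>"

lemma rules_gl_reduct: "rules (gl_reduct P I) = pos_rule ` {r \<in> rules P. neg_body_sat I r}"
  unfolding gl_reduct_def pos_rule_def neg_body_sat_def by auto

lemma atoms_gl_reduct [simp]: "atoms (gl_reduct P I) = atoms P"
  unfolding gl_reduct_def by simp

lemma elits_gl_reduct [simp]: "elits (gl_reduct P I) = elits P"
  unfolding gl_reduct_def by simp

lemma sat_pos_rule: "sat_rule M (pos_rule r) \<longleftrightarrow> (pos_body r \<subseteq> M \<longrightarrow> head r \<inter> M \<noteq> {})"
  unfolding sat_rule_def pos_rule_def by auto

lemma sat_rule_iff_pos_rule: "sat_rule M r \<longleftrightarrow> (neg_body_sat M r \<longrightarrow> sat_rule M (pos_rule r))"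
proof -
  have "(\<forall>b\<in>body r. sat_bodyel M b) \<longleftrightarrow> neg_body_sat M r \<and> pos_body r \<subseteq> M"
  proof -
    have "sat_bodyel M b \<longleftrightarrow> (\<forall>a. b = BAtom a \<longrightarrow> a \<in> M) \<and> (\<forall>l. b = BNot l \<longrightarrow> \<not> sat_lit M l)" for b
      by (cases b) auto
    then show ?thesis unfolding neg_body_sat_def pos_body_def by blast
  qed
  then show ?thesis unfolding sat_pos_rule sat_rule_def[of M r] by blast
qed

lemma Mods_iff_Mods_gl_reduct: "M \<in> Mods P \<longleftrightarrow> M \<in> Mods (gl_reduct P M)"
  unfolding Mods_def rules_gl_reduct using sat_rule_iff_pos_rule by auto

lemma Mods_subset_atoms: "M \<in> Mods P \<Longrightarrow> M \<subseteq> atoms P"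
  unfolding Mods_def by blast

lemma SE_diag_iff [simp]: "(Y, Y) \<in> SE P \<longleftrightarrow> Y \<in> Mods P"
  unfolding SE_def using Mods_iff_Mods_gl_reduct Mods_subset_atoms by blast

lemma SE_iff_Mods_gl_reduct:
  "X \<subseteq> Y \<Longrightarrow> Y \<in> Mods P \<Longrightarrow> (X, Y) \<in> SE P \<longleftrightarrow> X \<in> Mods (gl_reduct P Y)"
  unfolding SE_def using Mods_subset_atoms by blast

lemma SE_iff_gl_reduct:
  "(X, Y) \<in> SE P \<longleftrightarrow> X \<subseteq> Y \<and> Y \<in> Mods (gl_reduct P Y) \<and> X \<in> Mods (gl_reduct P Y)"
  unfolding SE_def using Mods_iff_Mods_gl_reduct Mods_subset_atoms by fastforce

section \<open>Strong equivalence of plain programs\<close>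

lemma wf_elp_rule_atoms:
  "wf_elp P \<Longrightarrow> r \<in> rules P \<Longrightarrow> head r \<subseteq> atoms P \<and> bodyel_atom ` body r \<subseteq> atoms P"
  unfolding wf_elp_def by blast

lemma sat_lit_Int: "lit_atom l \<in> A \<Longrightarrow> sat_lit (M \<inter> A) l \<longleftrightarrow> sat_lit M l"
  by (cases l) auto

lemma sat_bodyel_Int: "bodyel_atom b \<in> A \<Longrightarrow> sat_bodyel (M \<inter> A) b \<longleftrightarrow> sat_bodyel M b"
  by (cases b) (auto simp: sat_lit_Int)

lemma neg_body_sat_Int:
  "bodyel_atom ` body r \<subseteq> A \<Longrightarrow> neg_body_sat (M \<inter> A) r \<longleftrightarrow> neg_body_sat M r"
  unfolding neg_body_sat_def by (metis bodyel_atom.simps(2) image_subset_iff sat_lit_Int)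

lemma sat_rule_Int:
  assumes "head r \<subseteq> A" "bodyel_atom ` body r \<subseteq> A"
  shows "sat_rule (M \<inter> A) r \<longleftrightarrow> sat_rule M r"
proof -
  have "(\<forall>b\<in>body r. sat_bodyel (M \<inter> A) b) \<longleftrightarrow> (\<forall>b\<in>body r. sat_bodyel M b)"
    using assms(2) sat_bodyel_Int by blast
  moreover have "head r \<inter> (M \<inter> A) = head r \<inter> M" using assms(1) by blast
  ultimately show ?thesis unfolding sat_rule_def by simp
qed

lemma sat_pos_rule_Int:
  assumes "head r \<subseteq> A" "bodyel_atom ` body r \<subseteq> A"
  shows "sat_rule (M \<inter> A) (pos_rule r) \<longleftrightarrow> sat_rule M (pos_rule r)"
proof -
  have "pos_body r \<subseteq> A" using assms(2) unfolding pos_body_def by force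
  then show ?thesis unfolding sat_pos_rule using assms(1) by blast
qed

lemma atoms_elp_union [simp]: "atoms (elp_union P Q) = atoms P \<union> atoms Q"
  and elits_elp_union [simp]: "elits (elp_union P Q) = elits P \<union> elits Q"
  and rules_elp_union [simp]: "rules (elp_union P Q) = rules P \<union> rules Q"
  unfolding elp_union_def by simp_all

lemma Mods_union_iff:
  assumes "wf_elp Q"
  shows "M \<in> Mods (elp_union Q S) \<longleftrightarrow>
    M \<subseteq> atoms Q \<union> atoms S \<and> M \<inter> atoms Q \<in> Mods Q \<and> (\<forall>r\<in>rules S. sat_rule M r)"
proof -
  have "(\<forall>r\<in>rules Q. sat_rule M r) \<longleftrightarrow> (\<forall>r\<in>rules Q. sat_rule (M \<inter> atoms Q) r)"
    using sat_rule_Int wf_elp_rule_atoms[OF assms] by (metis (no_types, lifting))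
  then show ?thesis unfolding Mods_def by auto
qed

lemma Mods_gl_reduct_union_iff:
  assumes "wf_elp Q"
  shows "M' \<in> Mods (gl_reduct (elp_union Q S) M) \<longleftrightarrow>
    M' \<subseteq> atoms Q \<union> atoms S \<and> M' \<inter> atoms Q \<in> Mods (gl_reduct Q (M \<inter> atoms Q))
    \<and> (\<forall>r\<in>rules S. neg_body_sat M r \<longrightarrow> sat_rule M' (pos_rule r))"
proof -
  have "(\<forall>r\<in>rules Q. neg_body_sat M r \<longrightarrow> sat_rule M' (pos_rule r)) \<longleftrightarrow>
        (\<forall>r\<in>rules Q. neg_body_sat (M \<inter> atoms Q) r \<longrightarrow> sat_rule (M' \<inter> atoms Q) (pos_rule r))"
    using sat_pos_rule_Int neg_body_sat_Int wf_elp_rule_atoms[OF assms] by metis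
  then show ?thesis unfolding Mods_def rules_gl_reduct by auto
qed

lemma AS_union_eq_if_SE_eq:
  assumes "wf_elp Q1" "wf_elp Q2" "atoms Q1 = atoms Q2" "SE Q1 = SE Q2"
  shows "AS (elp_union Q1 S) = AS (elp_union Q2 S)"
proof -
  let ?A = "atoms Q1"
  have Mods_eq: "M \<in> Mods (elp_union Q1 S) \<longleftrightarrow> M \<in> Mods (elp_union Q2 S)" for M
    using SE_diag_iff[of "M \<inter> ?A"] assms
    unfolding Mods_union_iff[OF assms(1)] Mods_union_iff[OF assms(2)] by metis
  have gl_Mods_eq: "M' \<in> Mods (gl_reduct (elp_union Q1 S) M) \<longleftrightarrow> M' \<in> Mods (gl_reduct (elp_union Q2 S) M)"
    if "M \<in> Mods (elp_union Q1 S)" "M' \<subseteq> M" for M M'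
  proof -
    have "M \<inter> ?A \<in> Mods Q1" "M \<inter> ?A \<in> Mods Q2"
      using that(1) Mods_eq Mods_union_iff assms(1-3) by metis+
    then have "M' \<inter> ?A \<in> Mods (gl_reduct Q1 (M \<inter> ?A)) \<longleftrightarrow> M' \<inter> ?A \<in> Mods (gl_reduct Q2 (M \<inter> ?A))"
      using SE_iff_Mods_gl_reduct[of "M' \<inter> ?A" "M \<inter> ?A"] that(2) assms(4) by blast
    then show ?thesis
      unfolding Mods_gl_reduct_union_iff[OF assms(1)] Mods_gl_reduct_union_iff[OF assms(2)] assms(3)
      by blast
  qed
  show ?thesis unfolding AS_def using Mods_eq gl_Mods_eq by blast
qed

fun lit_compl :: "'a lit \<Rightarrow> 'a lit" where
  "lit_compl (PosL a) = NegL a" | "lit_compl (NegL a) = PosL a"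

lemma dneg_eq_BNot_compl: "dneg l = BNot (lit_compl l)"
  by (cases l) auto

lemma sat_lit_compl [simp]: "sat_lit I (lit_compl l) \<longleftrightarrow> \<not> sat_lit I l"
  by (cases l) auto

lemma lit_atom_compl [simp]: "lit_atom (lit_compl l) = lit_atom l"
  by (cases l) auto

definition epi_rule :: "'a lit set \<Rightarrow> 'a rule \<Rightarrow> 'a rule" where
  "epi_rule \<Phi> r = \<lparr>head = head r, body = body r \<union> BNot ` (epos r - \<Phi>) \<union> dneg ` eneg r,
     epos = {}, eneg = {}\<rparr>"

lemma rules_epi_reduct: "rules (epi_reduct P \<Phi>) = epi_rule \<Phi> ` {r \<in> rules P. eneg r \<inter> \<Phi> = {}}"
  unfolding epi_reduct_def epi_rule_def by auto

lemma atoms_epi_reduct [simp]: "atoms (epi_reduct P \<Phi>) = atoms P"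
  and elits_epi_reduct [simp]: "elits (epi_reduct P \<Phi>) = {}"
  unfolding epi_reduct_def by simp_all

lemma pos_rule_epi_rule [simp]: "pos_rule (epi_rule \<Phi> r) = pos_rule r"
  unfolding pos_rule_def pos_body_def epi_rule_def by (auto simp: dneg_eq_BNot_compl)

lemma neg_body_sat_epi_rule:
  "neg_body_sat I (epi_rule \<Phi> r) \<longleftrightarrow>
     neg_body_sat I r \<and> (\<forall>l\<in>epos r - \<Phi>. \<not> sat_lit I l) \<and> (\<forall>l\<in>eneg r. sat_lit I l)"
  unfolding neg_body_sat_def epi_rule_def by (auto simp: dneg_eq_BNot_compl)

lemma wf_elp_epi_reduct: "wf_elp P \<Longrightarrow> wf_elp (epi_reduct P \<Phi>)"
  unfolding wf_elp_def rules_epi_reduct by (auto simp: epi_rule_def dneg_eq_BNot_compl; blast)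

lemma epi_reduct_union:
  "epi_reduct (elp_union P Q) \<Phi> = elp_union (epi_reduct P \<Phi>) (epi_reduct Q \<Phi>)"
  unfolding epi_reduct_def elp_union_def by auto

lemma epi_reduct_plain:
  assumes "wf_elp P" "plain P"
  shows "epi_reduct P \<Phi> = P"
proof (rule elp.equality)
  have "epos r = {} \<and> eneg r = {}" if "r \<in> rules P" for r
    using assms that unfolding wf_elp_def plain_def by blast
  then have "r \<in> rules P \<Longrightarrow> epi_rule \<Phi> r = r \<and> eneg r \<inter> \<Phi> = {}" for r
    unfolding epi_rule_def by (simp add: rule.equality)
  then show "rules (epi_reduct P \<Phi>) = rules P"
    unfolding rules_epi_reduct by force
  show "elits (epi_reduct P \<Phi>) = elits P" using assms(2) unfolding plain_def by simp
qed simp_all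

lemma epi_reduct_Int_elits:
  assumes "wf_elp P"
  shows "epi_reduct P (\<Phi> \<inter> elits P) = epi_reduct P \<Phi>"
proof (rule elp.equality)
  have "eneg r \<inter> (\<Phi> \<inter> elits P) = eneg r \<inter> \<Phi> \<and> epi_rule (\<Phi> \<inter> elits P) r = epi_rule \<Phi> r"
    if "r \<in> rules P" for r
    using assms that unfolding wf_elp_def epi_rule_def by auto
  then show "rules (epi_reduct P (\<Phi> \<inter> elits P)) = rules (epi_reduct P \<Phi>)"
    unfolding rules_epi_reduct by (auto simp: image_iff)
qed simp_all

lemma rules_gl_reduct_epi_reduct:
  "rules (gl_reduct (epi_reduct P \<Phi>) Y) =
     pos_rule ` {r \<in> rules P. eneg r \<inter> \<Phi> = {} \<and> neg_body_sat Y (epi_rule \<Phi> r)}"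
proof -
  have "{r \<in> epi_rule \<Phi> ` {r \<in> rules P. eneg r \<inter> \<Phi> = {}}. neg_body_sat Y r}
      = epi_rule \<Phi> ` {r \<in> rules P. eneg r \<inter> \<Phi> = {} \<and> neg_body_sat Y (epi_rule \<Phi> r)}"
    by blast
  then show ?thesis unfolding rules_gl_reduct rules_epi_reduct by (simp add: image_image)
qed

lemma SE_epi_reduct_cong:
  assumes "\<Phi> \<subseteq> \<Psi>" "\<forall>l\<in>\<Psi> - \<Phi>. \<not> sat_lit Y l"
  shows "(X, Y) \<in> SE (epi_reduct P \<Phi>) \<longleftrightarrow> (X, Y) \<in> SE (epi_reduct P \<Psi>)"
proof -
  have "eneg r \<inter> \<Phi> = {} \<and> neg_body_sat Y (epi_rule \<Phi> r) \<longleftrightarrow> eneg r \<inter> \<Psi> = {} \<and> neg_body_sat Y (epi_rule \<Psi> r)"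
    for r using assms unfolding neg_body_sat_epi_rule by blast
  then have "gl_reduct (epi_reduct P \<Phi>) Y = gl_reduct (epi_reduct P \<Psi>) Y"
    by (intro elp.equality) (simp_all add: rules_gl_reduct_epi_reduct)
  then show ?thesis unfolding SE_iff_gl_reduct by simp
qed

section \<open>Equal SE-functions give equal world views\<close>

lemma compatible_Int:
  "compatible E' \<Phi> \<I> \<Longrightarrow> E \<subseteq> E' \<Longrightarrow> compatible E (\<Phi> \<inter> E) \<I>"
  unfolding compatible_def by blast

lemma compatible_image_iff:
  assumes "\<Phi> \<subseteq> E" "\<And>I l. I \<in> \<I> \<Longrightarrow> l \<in> E \<Longrightarrow> sat_lit (g I) l \<longleftrightarrow> sat_lit I l"
  shows "compatible E \<Phi> (g ` \<I>) \<longleftrightarrow> compatible E \<Phi> \<I>"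
  using assms unfolding compatible_def by (auto; metis DiffD1 subsetD)

lemma compatible_unique:
  "compatible E \<Phi> \<I> \<Longrightarrow> compatible E \<Psi> \<I> \<Longrightarrow> \<Phi> \<subseteq> E \<Longrightarrow> \<Psi> \<subseteq> E \<Longrightarrow> \<Phi> = \<Psi>"
  unfolding compatible_def by blast

lemma compatible_superset:
  assumes "compatible E \<Phi> W" "W \<subseteq> \<I>" "\<forall>I\<in>\<I>. \<forall>l\<in>E - \<Phi>. sat_lit I l"
  shows "compatible E \<Phi> \<I>"
  using assms unfolding compatible_def by blast

lemma realizable_Int_elits_if_cwv_guess_union:
  assumes "wf_elp P" "cwv_guess (elp_union P S) \<Phi>"
  shows "realizable P (\<Phi> \<inter> elits P)"
proof -
  let ?AS = "AS (elp_union (epi_reduct P \<Phi>) (epi_reduct S \<Phi>))"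
  let ?restrict = "\<lambda>M. M \<inter> atoms P"
  have "?restrict ` ?AS \<subseteq> Mods (epi_reduct P (\<Phi> \<inter> elits P))"
    using Mods_union_iff[OF wf_elp_epi_reduct[OF assms(1)]]
    unfolding AS_def epi_reduct_Int_elits[OF assms(1)] by auto
  moreover have "compatible (elits P) (\<Phi> \<inter> elits P) ?AS"
    using assms(2) compatible_Int unfolding cwv_guess_def epi_reduct_union by auto
  then have "compatible (elits P) (\<Phi> \<inter> elits P) (?restrict ` ?AS)"
    using compatible_image_iff sat_lit_Int assms(1) unfolding wf_elp_def
    by (metis (no_types, lifting) inf_le2)
  ultimately show ?thesis unfolding realizable_def by blast
qed

lemma SE_fun_eq_empty_iff: "SE_fun P \<Phi> = {} \<longleftrightarrow> \<not> realizable P \<Phi>"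
proof
  assume "SE_fun P \<Phi> = {}"
  moreover have "realizable P \<Phi> \<Longrightarrow> \<exists>I. (I, I) \<in> SE (epi_reduct P \<Phi>)"
    unfolding realizable_def compatible_def by auto
  ultimately show "\<not> realizable P \<Phi>" unfolding SE_fun_def by (auto simp del: SE_diag_iff)
qed (simp add: SE_fun_def)

lemma SE_epi_reduct_eq_if_same_SE_fun:
  assumes "same_SE_fun P1 P2" "\<Phi> \<subseteq> elits P1" "realizable P1 \<Phi>"
  shows "SE (epi_reduct P1 \<Phi>) = SE (epi_reduct P2 \<Phi>)"
proof -
  have "SE_fun P1 \<Phi> = SE_fun P2 \<Phi>" using assms(1,2) unfolding same_SE_fun_def by blast
  moreover then have "realizable P2 \<Phi>" using assms(3) SE_fun_eq_empty_iff by metis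
  ultimately show ?thesis using assms(3) unfolding SE_fun_def by simp
qed

lemma same_SE_fun_sym: "same_SE_fun P1 P2 \<Longrightarrow> same_SE_fun P2 P1"
  unfolding same_SE_fun_def by auto

lemma cwv_guess_union_transfer:
  assumes "wf_elp P1" "wf_elp P2" "atoms P1 = atoms P2" "elits P1 = elits P2"
    and "same_SE_fun P1 P2" "cwv_guess (elp_union P1 S) \<Phi>"
  shows "AS (epi_reduct (elp_union P1 S) \<Phi>) = AS (epi_reduct (elp_union P2 S) \<Phi>)
    \<and> cwv_guess (elp_union P2 S) \<Phi>"
proof -
  have "SE (epi_reduct P1 (\<Phi> \<inter> elits P1)) = SE (epi_reduct P2 (\<Phi> \<inter> elits P1))"
    using SE_epi_reduct_eq_if_same_SE_fun realizable_Int_elits_if_cwv_guess_union assms(1,5,6)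
    by blast
  then have "SE (epi_reduct P1 \<Phi>) = SE (epi_reduct P2 \<Phi>)"
    using epi_reduct_Int_elits assms(1,2,4) by metis
  then have "AS (epi_reduct (elp_union P1 S) \<Phi>) = AS (epi_reduct (elp_union P2 S) \<Phi>)"
    unfolding epi_reduct_union
    using AS_union_eq_if_SE_eq wf_elp_epi_reduct assms(1-3) atoms_epi_reduct by metis
  then show ?thesis using assms(4,6) unfolding cwv_guess_def by simp
qed

lemma CWVs_WVs_eqI:
  assumes "\<And>\<Phi>. cwv_guess Q1 \<Phi> \<longleftrightarrow> cwv_guess Q2 \<Phi>"
    and "\<And>\<Phi>. cwv_guess Q1 \<Phi> \<Longrightarrow> AS (epi_reduct Q1 \<Phi>) = AS (epi_reduct Q2 \<Phi>)"
  shows "CWVs Q1 = CWVs Q2 \<and> WVs Q1 = WVs Q2"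
  unfolding CWVs_def WVs_def using assms by (intro conjI Collect_cong) (metis, metis)

lemma WVs_subset_CWVs: "WVs P \<subseteq> CWVs P"
  unfolding WVs_def CWVs_def by blast

lemma union_CWVs_WVs_eq_if_same_SE_fun:
  assumes "wf_elp P1" "wf_elp P2" "atoms P1 = atoms P2" "elits P1 = elits P2" "same_SE_fun P1 P2"
  shows "CWVs (elp_union P1 S) = CWVs (elp_union P2 S) \<and> WVs (elp_union P1 S) = WVs (elp_union P2 S)"
proof (rule CWVs_WVs_eqI)
  note transfer = cwv_guess_union_transfer[OF assms]
    cwv_guess_union_transfer[OF assms(2,1) assms(3,4)[symmetric] same_SE_fun_sym[OF assms(5)]]
  show "cwv_guess (elp_union P1 S) \<Phi> \<longleftrightarrow> cwv_guess (elp_union P2 S) \<Phi>" for \<Phi>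
    using transfer by blast
  show "cwv_guess (elp_union P1 S) \<Phi> \<Longrightarrow>
      AS (epi_reduct (elp_union P1 S) \<Phi>) = AS (epi_reduct (elp_union P2 S) \<Phi>)" for \<Phi>
    using transfer by blast
qed

section \<open>Plain programs testing SE-models\<close>

definition plain_rule :: "'a set \<Rightarrow> 'a bodyel set \<Rightarrow> 'a rule" where
  "plain_rule h b = \<lparr>head = h, body = b, epos = {}, eneg = {}\<rparr>"

(* One fresh label f K per candidate K.  Joined with a program Q over A, the constraints force
   every model to be K \<union> {f K} with K a model of Q, and the rules with body f K leave
   B K \<union> {f K} as the only possible smaller model of the reduct. *)
definition tester_rules :: "'a set \<Rightarrow> 'a set set \<Rightarrow> ('a set \<Rightarrow> 'a set) \<Rightarrow> ('a set \<Rightarrow> 'a) \<Rightarrow> 'a rule set"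
  where
  "tester_rules A KK B f =
     {plain_rule (f ` KK) {}}
   \<union> {plain_rule {} {BAtom (f K), BAtom a} | K a. K \<in> KK \<and> a \<in> A - K}
   \<union> {plain_rule {} {BAtom (f K), BNot (PosL a)} | K a. K \<in> KK \<and> a \<in> K}
   \<union> {plain_rule {a} {BAtom (f K)} | K a. K \<in> KK \<and> a \<in> B K}
   \<union> {plain_rule {a} {BAtom (f K), BAtom b} | K a b. K \<in> KK \<and> a \<in> K - B K \<and> b \<in> K - B K}"

lemma neg_body_sat_plain_rule [simp]:
  "neg_body_sat M (plain_rule h b) \<longleftrightarrow> (\<forall>l. BNot l \<in> b \<longrightarrow> \<not> sat_lit M l)"
  unfolding neg_body_sat_def plain_rule_def by simp

lemma sat_pos_plain_rule [simp]:
  "sat_rule M' (pos_rule (plain_rule h b)) \<longleftrightarrow> ((\<forall>a. BAtom a \<in> b \<longrightarrow> a \<in> M') \<longrightarrow> h \<inter> M' \<noteq> {})"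
  unfolding sat_pos_rule plain_rule_def pos_body_def by auto

lemma Ball_setcompr2: "(\<forall>r\<in>{g x y | x y. P x y}. Q r) \<longleftrightarrow> (\<forall>x y. P x y \<longrightarrow> Q (g x y))"
  by blast

lemma Ball_setcompr3: "(\<forall>r\<in>{g x y z | x y z. P x y z}. Q r) \<longleftrightarrow> (\<forall>x y z. P x y z \<longrightarrow> Q (g x y z))"
  by blast

lemma gl_tester_rules_iff:
  "(\<forall>r\<in>tester_rules A KK B f. neg_body_sat M r \<longrightarrow> sat_rule M' (pos_rule r)) \<longleftrightarrow>
     f ` KK \<inter> M' \<noteq> {} \<and> (\<forall>K\<in>KK. f K \<in> M' \<longrightarrow> M' \<inter> A \<subseteq> K \<and> K \<subseteq> M \<and> B K \<subseteq> M'
        \<and> (\<forall>a\<in>K - B K. \<forall>b\<in>K - B K. b \<in> M' \<longrightarrow> a \<in> M'))"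
proof -
  let ?red = "\<lambda>r. neg_body_sat M r \<longrightarrow> sat_rule M' (pos_rule r)"
  have "(\<forall>r\<in>{plain_rule (f ` KK) {}}. ?red r) \<longleftrightarrow> f ` KK \<inter> M' \<noteq> {}"
    by simp
  moreover have "(\<forall>r\<in>{plain_rule {} {BAtom (f K), BAtom a} | K a. K \<in> KK \<and> a \<in> A - K}. ?red r)
      \<longleftrightarrow> (\<forall>K\<in>KK. f K \<in> M' \<longrightarrow> M' \<inter> A \<subseteq> K)"
    unfolding Ball_setcompr2 by auto
  moreover have "(\<forall>r\<in>{plain_rule {} {BAtom (f K), BNot (PosL a)} | K a. K \<in> KK \<and> a \<in> K}. ?red r)
      \<longleftrightarrow> (\<forall>K\<in>KK. f K \<in> M' \<longrightarrow> K \<subseteq> M)"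
    unfolding Ball_setcompr2 by auto
  moreover have "(\<forall>r\<in>{plain_rule {a} {BAtom (f K)} | K a. K \<in> KK \<and> a \<in> B K}. ?red r)
      \<longleftrightarrow> (\<forall>K\<in>KK. f K \<in> M' \<longrightarrow> B K \<subseteq> M')"
    unfolding Ball_setcompr2 by auto
  moreover have "(\<forall>r\<in>{plain_rule {a} {BAtom (f K), BAtom b} | K a b. K \<in> KK \<and> a \<in> K - B K \<and> b \<in> K - B K}. ?red r)
      \<longleftrightarrow> (\<forall>K\<in>KK. f K \<in> M' \<longrightarrow> (\<forall>a\<in>K - B K. \<forall>b\<in>K - B K. b \<in> M' \<longrightarrow> a \<in> M'))"
    unfolding Ball_setcompr3 by auto
  ultimately show ?thesis unfolding tester_rules_def ball_Un
    by (simp only: imp_conjR ball_conj_distrib conj_assoc)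
qed

definition se_tester :: "'a set \<Rightarrow> 'a set set \<Rightarrow> ('a set \<Rightarrow> 'a set) \<Rightarrow> ('a set \<Rightarrow> 'a) \<Rightarrow> 'a elp"
  where "se_tester A KK B f = \<lparr>atoms = A \<union> f ` KK, elits = {}, rules = tester_rules A KK B f\<rparr>"

definition se_test :: "'a elp \<Rightarrow> 'a set set \<Rightarrow> ('a set \<Rightarrow> 'a set) \<Rightarrow> 'a set set" where
  "se_test Q KK B = {K \<in> KK. (K, K) \<in> SE Q \<and> (B K = K \<or> (B K, K) \<notin> SE Q)}"

lemma obtain_fresh_labels:
  assumes "infinite (UNIV :: 'a set)" "finite (A :: 'a set)" "finite (KK :: 'b set)"
  obtains f :: "'b \<Rightarrow> 'a" where "inj_on f KK" "f ` KK \<inter> A = {}"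
proof -
  have "infinite (- A)" using assms(1,2) by (simp add: Compl_eq_Diff_UNIV Diff_infinite_finite)
  then obtain S where "finite S" "card S = card KK" "S \<subseteq> - A"
    using infinite_arbitrarily_large by blast
  then obtain f where "bij_betw f KK S" using finite_same_card_bij assms(3) by metis
  then show ?thesis using that \<open>S \<subseteq> - A\<close> unfolding bij_betw_def by blast
qed

section \<open>Unequal SE-functions are separated by a plain program\<close>

definition plain_separator :: "'a elp \<Rightarrow> 'a elp \<Rightarrow> 'a elp \<Rightarrow> bool" where
  "plain_separator R P1 P2 \<longleftrightarrow> wf_elp R \<and> plain R
     \<and> CWVs (elp_union P1 R) \<noteq> CWVs (elp_union P2 R) \<and> WVs (elp_union P1 R) \<noteq> WVs (elp_union P2 R)"

lemma plain_separator_commute: "plain_separator R P1 P2 \<longleftrightarrow> plain_separator R P2 P1"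
  unfolding plain_separator_def by metis

context
  fixes A :: "'a set" and KK :: "'a set set" and B :: "'a set \<Rightarrow> 'a set" and f :: "'a set \<Rightarrow> 'a"
  assumes finite_atoms: "finite A"
    and candidates: "\<forall>K\<in>KK. K \<subseteq> A"
    and below: "\<forall>K\<in>KK. B K \<subseteq> K"
    and labels_inj: "inj_on f KK"
    and labels_fresh: "f ` KK \<inter> A = {}"
begin

lemma sat_tester_rules_iff:
  "(\<forall>r\<in>tester_rules A KK B f. sat_rule M r) \<longleftrightarrow>
     f ` KK \<inter> M \<noteq> {} \<and> (\<forall>K\<in>KK. f K \<in> M \<longrightarrow> M \<inter> A = K)"
proof -
  have "(\<forall>r\<in>tester_rules A KK B f. sat_rule M r) \<longleftrightarrow>
      (\<forall>r\<in>tester_rules A KK B f. neg_body_sat M r \<longrightarrow> sat_rule M (pos_rule r))"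
    using sat_rule_iff_pos_rule by blast
  moreover have "(M \<inter> A \<subseteq> K \<and> K \<subseteq> M \<and> B K \<subseteq> M \<and> (\<forall>a\<in>K - B K. \<forall>b\<in>K - B K. b \<in> M \<longrightarrow> a \<in> M))
      \<longleftrightarrow> M \<inter> A = K" if "K \<in> KK" for K
    using that candidates below by blast
  ultimately show ?thesis unfolding gl_tester_rules_iff by (simp cong: ball_cong)
qed

lemma wf_se_tester: "wf_elp (se_tester A KK B f)"
proof -
  have "finite KK" using candidates finite_atoms by (meson Pow_iff finite_Pow_iff finite_subset subsetI)
  moreover have "\<forall>r\<in>tester_rules A KK B f. head r \<subseteq> A \<union> f ` KK
      \<and> bodyel_atom ` body r \<subseteq> A \<union> f ` KK \<and> epos r = {} \<and> eneg r = {}"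
    unfolding tester_rules_def ball_Un Ball_setcompr2 Ball_setcompr3
    using candidates below by (auto simp: plain_rule_def)
  ultimately show ?thesis using finite_atoms unfolding wf_elp_def se_tester_def by simp
qed

lemma plain_se_tester: "plain (se_tester A KK B f)"
  unfolding plain_def se_tester_def by simp

lemma insert_label_Int: "K \<in> KK \<Longrightarrow> Z \<subseteq> A \<Longrightarrow> insert (f K) Z \<inter> A = Z"
  using labels_fresh by blast

lemma label_eqD: "K \<in> KK \<Longrightarrow> J \<in> KK \<Longrightarrow> Z \<subseteq> A \<Longrightarrow> f J \<in> insert (f K) Z \<Longrightarrow> J = K"
  using labels_fresh labels_inj by (auto dest: inj_onD)

lemma inj_on_insert_label: "inj_on (\<lambda>K. insert (f K) K) KK"
  by (rule inj_onI) (metis candidates insert_label_Int)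

lemma Mods_union_se_tester:
  assumes "wf_elp Q" "atoms Q = A"
  shows "M \<in> Mods (elp_union Q (se_tester A KK B f)) \<longleftrightarrow> (\<exists>K\<in>KK. M = insert (f K) K \<and> K \<in> Mods Q)"
proof -
  have "M \<subseteq> A \<union> f ` KK \<and> f ` KK \<inter> M \<noteq> {} \<and> (\<forall>K\<in>KK. f K \<in> M \<longrightarrow> M \<inter> A = K)
      \<longleftrightarrow> (\<exists>K\<in>KK. M = insert (f K) K)"
  proof
    assume M: "M \<subseteq> A \<union> f ` KK \<and> f ` KK \<inter> M \<noteq> {} \<and> (\<forall>K\<in>KK. f K \<in> M \<longrightarrow> M \<inter> A = K)"
    then obtain K where K: "K \<in> KK" "f K \<in> M" "M \<inter> A = K" by blast
    have "f J = f K" if "J \<in> KK" "f J \<in> M" for J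
      using M K that by metis
    then have "M = insert (f K) K" using M K by blast
    then show "\<exists>K\<in>KK. M = insert (f K) K" using K(1) by blast
  next
    assume "\<exists>K\<in>KK. M = insert (f K) K"
    then obtain K where K: "K \<in> KK" "M = insert (f K) K" by blast
    then have "f J \<in> M \<Longrightarrow> J \<in> KK \<Longrightarrow> M \<inter> A = J" for J
      using candidates insert_label_Int label_eqD by metis
    then show "M \<subseteq> A \<union> f ` KK \<and> f ` KK \<inter> M \<noteq> {} \<and> (\<forall>K\<in>KK. f K \<in> M \<longrightarrow> M \<inter> A = K)"
      using K candidates by blast
  qed
  moreover have "M \<in> Mods (elp_union Q (se_tester A KK B f)) \<longleftrightarrow>
      (M \<subseteq> A \<union> f ` KK \<and> f ` KK \<inter> M \<noteq> {} \<and> (\<forall>K\<in>KK. f K \<in> M \<longrightarrow> M \<inter> A = K)) \<and> M \<inter> A \<in> Mods Q"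
    unfolding Mods_union_iff[OF assms(1)] assms(2) by (auto simp: se_tester_def sat_tester_rules_iff)
  ultimately show ?thesis using insert_label_Int candidates by metis
qed

lemma Mods_gl_reduct_union_se_tester:
  assumes "wf_elp Q" "atoms Q = A"
  shows "M' \<in> Mods (gl_reduct (elp_union Q (se_tester A KK B f)) M) \<longleftrightarrow>
    M' \<subseteq> A \<union> f ` KK \<and> M' \<inter> A \<in> Mods (gl_reduct Q (M \<inter> A)) \<and> f ` KK \<inter> M' \<noteq> {}
    \<and> (\<forall>J\<in>KK. f J \<in> M' \<longrightarrow> M' \<inter> A \<subseteq> J \<and> J \<subseteq> M \<and> B J \<subseteq> M'
        \<and> (\<forall>a\<in>J - B J. \<forall>b\<in>J - B J. b \<in> M' \<longrightarrow> a \<in> M'))"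
  unfolding Mods_gl_reduct_union_iff[OF assms(1)] assms(2)
  by (auto simp: se_tester_def gl_tester_rules_iff)

lemma smaller_gl_model_union_se_tester:
  assumes "wf_elp Q" "atoms Q = A" "K \<in> KK" "K \<in> Mods Q"
  defines "M \<equiv> insert (f K) K"
  shows "(\<exists>M'\<subset>M. M' \<in> Mods (gl_reduct (elp_union Q (se_tester A KK B f)) M))
    \<longleftrightarrow> B K \<noteq> K \<and> (B K, K) \<in> SE Q"
proof -
  have KA: "K \<subseteq> A" "B K \<subseteq> K" using assms(3) candidates below by auto
  have MA: "M \<inter> A = K" unfolding M_def using insert_label_Int[OF assms(3) KA(1)] .
  note gl_iff = Mods_gl_reduct_union_se_tester[OF assms(1,2), of _ M, unfolded MA]
  show ?thesis
  proof
    assume "\<exists>M'\<subset>M. M' \<in> Mods (gl_reduct (elp_union Q (se_tester A KK B f)) M)"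
    then obtain M' where M': "M' \<subset> M" "M' \<in> Mods (gl_reduct (elp_union Q (se_tester A KK B f)) M)"
      by blast
    have gl: "M' \<inter> A \<in> Mods (gl_reduct Q K)" "f ` KK \<inter> M' \<noteq> {}"
      "\<forall>J\<in>KK. f J \<in> M' \<longrightarrow> M' \<inter> A \<subseteq> J \<and> J \<subseteq> M \<and> B J \<subseteq> M'
          \<and> (\<forall>a\<in>J - B J. \<forall>b\<in>J - B J. b \<in> M' \<longrightarrow> a \<in> M')"
      using M'(2) unfolding gl_iff by blast+
    then obtain J where "J \<in> KK" "f J \<in> M'" by blast
    then have "f K \<in> M'" using label_eqD[OF assms(3) _ KA(1)] M'(1) unfolding M_def by blast
    then have closed: "M' \<inter> A \<subseteq> K" "B K \<subseteq> M'" "\<forall>a\<in>K - B K. \<forall>b\<in>K - B K. b \<in> M' \<longrightarrow> a \<in> M'"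
      using gl(3) assms(3) by blast+
    obtain a where a: "a \<in> K" "a \<notin> M'" using M'(1) \<open>f K \<in> M'\<close> unfolding M_def by blast
    then have "M' \<inter> A = B K" using closed KA by blast
    moreover have "B K \<noteq> K" using a closed(2) by blast
    ultimately show "B K \<noteq> K \<and> (B K, K) \<in> SE Q"
      using gl(1) SE_iff_Mods_gl_reduct KA(2) assms(4) by metis
  next
    assume BK: "B K \<noteq> K \<and> (B K, K) \<in> SE Q"
    let ?M' = "insert (f K) (B K)"
    have "?M' \<inter> A = B K" using insert_label_Int[OF assms(3)] KA by blast
    moreover have "f J \<in> ?M' \<Longrightarrow> J \<in> KK \<Longrightarrow> J = K" for J
      using label_eqD[OF assms(3)] KA by blast
    moreover have "B K \<in> Mods (gl_reduct Q K)" using BK SE_iff_Mods_gl_reduct KA(2) assms(4) by blast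
    ultimately have "?M' \<in> Mods (gl_reduct (elp_union Q (se_tester A KK B f)) M)"
      unfolding gl_iff using assms(3) KA by (auto simp: M_def)
    moreover have "?M' \<subset> M"
      unfolding M_def using BK KA insert_label_Int[OF assms(3)] by blast
    ultimately show "\<exists>M'\<subset>M. M' \<in> Mods (gl_reduct (elp_union Q (se_tester A KK B f)) M)" by blast
  qed
qed

lemma AS_union_se_tester:
  assumes "wf_elp Q" "atoms Q = A"
  shows "AS (elp_union Q (se_tester A KK B f)) = (\<lambda>K. insert (f K) K) ` se_test Q KK B"
  unfolding AS_def se_test_def Mods_union_se_tester[OF assms]
  using smaller_gl_model_union_se_tester[OF assms] by auto

lemma AS_epi_reduct_union_se_tester:
  assumes "wf_elp P" "atoms P = A"
  shows "AS (epi_reduct (elp_union P (se_tester A KK B f)) \<Psi>)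
    = (\<lambda>K. insert (f K) K) ` se_test (epi_reduct P \<Psi>) KK B"
  unfolding epi_reduct_union epi_reduct_plain[OF wf_se_tester plain_se_tester]
  using AS_union_se_tester[OF wf_elp_epi_reduct[OF assms(1)]] assms(2) by simp

lemma cwv_guess_union_se_tester:
  assumes "wf_elp P" "atoms P = A"
  shows "cwv_guess (elp_union P (se_tester A KK B f)) \<Psi> \<longleftrightarrow>
    \<Psi> \<subseteq> elits P \<and> compatible (elits P) \<Psi> (se_test (epi_reduct P \<Psi>) KK B)"
proof -
  have sat_lift: "sat_lit (insert (f K) K) l \<longleftrightarrow> sat_lit K l"
    if "K \<in> se_test (epi_reduct P \<Psi>) KK B" "l \<in> elits P" for K l
  proof -
    have "lit_atom l \<in> A" "f K \<notin> A"
      using that assms labels_fresh unfolding wf_elp_def se_test_def by auto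
    then show ?thesis by (cases l) auto
  qed
  have "compatible (elits P) \<Psi> ((\<lambda>K. insert (f K) K) ` se_test (epi_reduct P \<Psi>) KK B)
      \<longleftrightarrow> compatible (elits P) \<Psi> (se_test (epi_reduct P \<Psi>) KK B)" if "\<Psi> \<subseteq> elits P"
    using compatible_image_iff[where g = "\<lambda>K. insert (f K) K", OF that sat_lift] .
  moreover have "elits (elp_union P (se_tester A KK B f)) = elits P" by (simp add: se_tester_def)
  ultimately show ?thesis
    unfolding cwv_guess_def AS_epi_reduct_union_se_tester[OF assms] by metis
qed

lemma se_tester_separates:
  assumes wf: "wf_elp Pa" "wf_elp Pb" "atoms Pa = A" "atoms Pb = A" "elits Pa = E" "elits Pb = E"
    and "\<Phi> \<subseteq> E"
    and compat: "compatible E \<Phi> (se_test (epi_reduct Pa \<Phi>) KK B)"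
    and differ: "se_test (epi_reduct Pa \<Phi>) KK B \<noteq> se_test (epi_reduct Pb \<Phi>) KK B"
    and maximal: "\<And>\<Psi>. \<Phi> \<subset> \<Psi> \<Longrightarrow> \<Psi> \<subseteq> E \<Longrightarrow> \<not> compatible E \<Psi> (se_test (epi_reduct Pa \<Psi>) KK B)"
  shows "plain_separator (se_tester A KK B f) Pa Pb"
proof -
  let ?R = "se_tester A KK B f"
  let ?lift = "image (\<lambda>K. insert (f K) K)"
  let ?W = "?lift (se_test (epi_reduct Pa \<Phi>) KK B)"
  note guess_a = cwv_guess_union_se_tester[OF wf(1,3)] and guess_b = cwv_guess_union_se_tester[OF wf(2,4)]
  have "cwv_guess (elp_union Pa ?R) \<Phi>" "\<nexists>\<Psi>. cwv_guess (elp_union Pa ?R) \<Psi> \<and> \<Phi> \<subset> \<Psi>"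
    using guess_a assms(5,7) compat maximal by auto
  then have W_WV: "?W \<in> WVs (elp_union Pa ?R)"
    unfolding WVs_def AS_epi_reduct_union_se_tester[OF wf(1,3)] by blast
  have W_not_CWV: "?W \<notin> CWVs (elp_union Pb ?R)"
  proof
    assume "?W \<in> CWVs (elp_union Pb ?R)"
    then obtain \<Psi> where \<Psi>: "\<Psi> \<subseteq> E" "compatible E \<Psi> (se_test (epi_reduct Pb \<Psi>) KK B)"
      and "?W = ?lift (se_test (epi_reduct Pb \<Psi>) KK B)"
      unfolding CWVs_def AS_epi_reduct_union_se_tester[OF wf(2,4)] guess_b wf(6) by blast
    then have same: "se_test (epi_reduct Pa \<Phi>) KK B = se_test (epi_reduct Pb \<Psi>) KK B"
      using inj_on_insert_label inj_on_image_eq_iff unfolding se_test_def by (metis (no_types, lifting) mem_Collect_eq subsetI)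
    then have "\<Psi> = \<Phi>" using compatible_unique \<Psi> compat assms(7) by metis
    then show False using same differ by simp
  qed
  then show ?thesis
    using W_WV WVs_subset_CWVs wf_se_tester plain_se_tester unfolding plain_separator_def by blast
qed

end

lemma se_test_epi_reduct_cong:
  assumes "\<Phi> \<subseteq> \<Psi>" "\<forall>l\<in>\<Psi> - \<Phi>. \<not> sat_lit Y l"
  shows "Y \<in> se_test (epi_reduct P \<Phi>) KK B \<longleftrightarrow> Y \<in> se_test (epi_reduct P \<Psi>) KK B"
  unfolding se_test_def using SE_epi_reduct_cong[OF assms] by blast

lemma compatible_se_test_insert:
  assumes W: "W \<subseteq> Mods Q" "compatible E \<Phi> W" and B: "\<And>K. K \<noteq> Y \<Longrightarrow> B K = K"
    and Y_sat: "Y \<in> se_test Q (insert Y W) B \<longleftrightarrow> (\<forall>l\<in>E - \<Phi>. sat_lit Y l)"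
  shows "compatible E \<Phi> (se_test Q (insert Y W) B)"
proof (rule compatible_superset[OF W(2)])
  have W_sat: "\<forall>K\<in>W. \<forall>l\<in>E - \<Phi>. sat_lit K l" using W(2) unfolding compatible_def by blast
  show "W \<subseteq> se_test Q (insert Y W) B"
  proof
    fix K assume "K \<in> W"
    then show "K \<in> se_test Q (insert Y W) B"
      using Y_sat W_sat B W(1) unfolding se_test_def by (cases "K = Y") auto
  qed
  have "se_test Q (insert Y W) B \<subseteq> insert Y W" unfolding se_test_def by blast
  then show "\<forall>I\<in>se_test Q (insert Y W) B. \<forall>l\<in>E - \<Phi>. sat_lit I l" using W_sat Y_sat by blast
qed

lemma not_compatible_se_test_insert:
  assumes "compatible E \<Phi> W" "\<Phi> \<subset> \<Psi>" "\<Psi> \<subseteq> E"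
    and Y_sat: "Y \<in> se_test (epi_reduct P \<Phi>) (insert Y W) B \<longleftrightarrow> (\<forall>l\<in>E - \<Phi>. sat_lit Y l)"
  shows "\<not> compatible E \<Psi> (se_test (epi_reduct P \<Psi>) (insert Y W) B)"
proof
  let ?T = "\<lambda>\<Psi>. se_test (epi_reduct P \<Psi>) (insert Y W) B"
  have W_sat: "\<forall>K\<in>W. \<forall>l\<in>E - \<Phi>. sat_lit K l" using assms(1) unfolding compatible_def by blast
  assume "compatible E \<Psi> (?T \<Psi>)"
  then have falsified: "\<forall>l\<in>\<Psi>. \<exists>K\<in>?T \<Psi>. \<not> sat_lit K l"
    unfolding compatible_def by (elim conjE)
  \<comment> \<open>Members of W satisfy every literal outside \<Phi>, so only Y can falsify those of \<Psi> - \<Phi>.\<close>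
  have Y_false: "Y \<in> ?T \<Psi> \<and> \<not> sat_lit Y l" if "l \<in> \<Psi> - \<Phi>" for l
  proof -
    have "l \<in> \<Psi>" using that by blast
    then obtain K where "K \<in> ?T \<Psi>" "\<not> sat_lit K l"
      using falsified by blast
    moreover have "K \<notin> W" using W_sat that assms(3) \<open>\<not> sat_lit K l\<close> by blast
    ultimately show ?thesis unfolding se_test_def by auto
  qed
  obtain l where l: "l \<in> \<Psi> - \<Phi>" using assms(2) by blast
  then have "Y \<in> ?T \<Phi>"
    using Y_false se_test_epi_reduct_cong[of \<Phi> \<Psi> Y] assms(2) by blast
  then show False using Y_sat Y_false l assms(3) by blast
qed

lemma plain_separator_if_witness:
  fixes Pa Pb :: "'a elp"
  assumes "infinite (UNIV :: 'a set)"
    and wf: "wf_elp Pa" "wf_elp Pb" "atoms Pa = A" "atoms Pb = A" "elits Pa = E" "elits Pb = E"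
    and "\<Phi> \<subseteq> E" and W: "W \<subseteq> Mods (epi_reduct Pa \<Phi>)" "compatible E \<Phi> W"
    and "Y \<subseteq> A" and B: "\<And>K. K \<noteq> Y \<Longrightarrow> B K = K" "B Y \<subseteq> Y"
    and Y_sat: "Y \<in> se_test (epi_reduct Pa \<Phi>) (insert Y W) B \<longleftrightarrow> (\<forall>l\<in>E - \<Phi>. sat_lit Y l)"
    and Y_differ: "Y \<in> se_test (epi_reduct Pa \<Phi>) (insert Y W) B \<longleftrightarrow>
      Y \<notin> se_test (epi_reduct Pb \<Phi>) (insert Y W) B"
  shows "\<exists>R. plain_separator R Pa Pb"
proof -
  let ?KK = "insert Y W"
  have KK: "finite A" "\<forall>K\<in>?KK. K \<subseteq> A" "\<forall>K\<in>?KK. B K \<subseteq> K"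
    using wf(1,3) unfolding wf_elp_def apply blast
    using W(1) Mods_subset_atoms wf(3) \<open>Y \<subseteq> A\<close> apply force
    using B by (metis insert_iff order_refl)
  have "finite ?KK" using KK(1,2) by (meson Pow_iff finite_Pow_iff finite_subset subsetI)
  then obtain f :: "'a set \<Rightarrow> 'a" where "inj_on f ?KK" "f ` ?KK \<inter> A = {}"
    using obtain_fresh_labels assms(1) KK(1) by blast
  then have "plain_separator (se_tester A ?KK B f) Pa Pb"
    using se_tester_separates[OF KK _ _ wf \<open>\<Phi> \<subseteq> E\<close>] Y_differ
      compatible_se_test_insert[OF W B(1) Y_sat] not_compatible_se_test_insert[OF W(2) _ _ Y_sat]
    by blast
  then show ?thesis by blast
qed

lemma plain_separator_if_unrealizable:
  fixes P1 P2 :: "'a elp"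
  assumes "infinite (UNIV :: 'a set)"
    and wf: "wf_elp P1" "wf_elp P2" "atoms P1 = A" "atoms P2 = A" "elits P1 = E" "elits P2 = E"
    and "\<Phi> \<subseteq> E" and I: "I \<subseteq> Mods (epi_reduct P1 \<Phi>)" "compatible E \<Phi> I"
    and unrealizable: "\<not> realizable P2 \<Phi>"
  shows "\<exists>R. plain_separator R P1 P2"
proof -
  obtain Y where Y: "Y \<in> I" "Y \<notin> Mods (epi_reduct P2 \<Phi>)"
    using I unrealizable unfolding realizable_def wf(6) by blast
  then have "Y \<in> se_test (epi_reduct P1 \<Phi>) (insert Y I) id" "\<forall>l\<in>E - \<Phi>. sat_lit Y l"
    "Y \<notin> se_test (epi_reduct P2 \<Phi>) (insert Y I) id"
    using I unfolding se_test_def compatible_def by auto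
  moreover have "Y \<subseteq> A" using Y I(1) Mods_subset_atoms wf(3) by fastforce
  ultimately show ?thesis using plain_separator_if_witness[OF assms(1) wf assms(8) I, of Y id] by simp
qed

lemma plain_separator_if_SE_differs:
  fixes P1 P2 :: "'a elp"
  assumes "infinite (UNIV :: 'a set)"
    and wf: "wf_elp P1" "wf_elp P2" "atoms P1 = A" "atoms P2 = A" "elits P1 = E" "elits P2 = E"
    and "\<Phi> \<subseteq> E"
    and I: "I \<subseteq> Mods (epi_reduct P1 \<Phi>)" "compatible E \<Phi> I"
    and J: "J \<subseteq> Mods (epi_reduct P2 \<Phi>)" "compatible E \<Phi> J"
    and XY: "(X, Y) \<in> SE (epi_reduct P1 \<Phi>)" "(X, Y) \<notin> SE (epi_reduct P2 \<Phi>)"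
  shows "\<exists>R. plain_separator R P1 P2"
proof -
  have Y: "X \<subseteq> Y" "Y \<subseteq> A" "Y \<in> Mods (epi_reduct P1 \<Phi>)"
    using XY(1) wf(3) unfolding SE_def by auto
  \<comment> \<open>If Y is no model of the second reduct, the pair (Y, Y) already tells the reducts apart.\<close>
  define X' where "X' = (if (Y, Y) \<in> SE (epi_reduct P2 \<Phi>) then X else Y)"
  define B where "B = (\<lambda>K. if K = Y then X' else K)"
  have B: "\<And>K. K \<noteq> Y \<Longrightarrow> B K = K" "B Y \<subseteq> Y" using Y(1) unfolding B_def X'_def by auto
  have test1: "Y \<in> se_test (epi_reduct P1 \<Phi>) (insert Y KK) B \<longleftrightarrow> X' = Y" for KK
    using XY(1) Y(3) unfolding se_test_def B_def X'_def by auto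
  have test2: "Y \<in> se_test (epi_reduct P2 \<Phi>) (insert Y KK) B \<longleftrightarrow> X' \<noteq> Y" for KK
    using XY(2) unfolding se_test_def B_def X'_def by auto
  show ?thesis
  proof (cases "(\<forall>l\<in>E - \<Phi>. sat_lit Y l) \<longleftrightarrow> X' = Y")
    case True
    then show ?thesis
      using plain_separator_if_witness[OF assms(1) wf assms(8) I Y(2) B] test1 test2 by blast
  next
    case False
    then have "\<exists>R. plain_separator R P2 P1"
      using plain_separator_if_witness[OF assms(1) wf(2,1,4,3,6,5) assms(8) J Y(2) B] test1 test2
      by blast
    then show ?thesis using plain_separator_commute by blast
  qed
qed

lemma plain_separator_if_SE_fun_differs:
  fixes P1 P2 :: "'a elp"
  assumes "infinite (UNIV :: 'a set)"
    and wf: "wf_elp P1" "wf_elp P2" "atoms P1 = A" "atoms P2 = A" "elits P1 = E" "elits P2 = E"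
    and "\<Phi> \<subseteq> E" "(X, Y) \<in> SE_fun P1 \<Phi>" "(X, Y) \<notin> SE_fun P2 \<Phi>"
  shows "\<exists>R. plain_separator R P1 P2"
proof -
  have "realizable P1 \<Phi>" and XY: "(X, Y) \<in> SE (epi_reduct P1 \<Phi>)"
    using assms(9) unfolding SE_fun_def by (auto split: if_splits)
  then obtain I where I: "I \<subseteq> Mods (epi_reduct P1 \<Phi>)" "compatible E \<Phi> I"
    unfolding realizable_def wf(5) by blast
  show ?thesis
  proof (cases "realizable P2 \<Phi>")
    case False
    then show ?thesis using plain_separator_if_unrealizable[OF assms(1) wf assms(8) I] by blast
  next
    case True
    then obtain J where "J \<subseteq> Mods (epi_reduct P2 \<Phi>)" "compatible E \<Phi> J"
      unfolding realizable_def wf(6) by blast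
    moreover have "(X, Y) \<notin> SE (epi_reduct P2 \<Phi>)" using assms(10) True unfolding SE_fun_def by simp
    ultimately show ?thesis using plain_separator_if_SE_differs[OF assms(1) wf assms(8) I _ _ XY] by blast
  qed
qed

lemma plain_separator_if_not_same_SE_fun:
  fixes P1 P2 :: "'a elp"
  assumes "infinite (UNIV :: 'a set)" "wf_elp P1" "wf_elp P2" "atoms P1 = atoms P2" "elits P1 = elits P2"
    and "\<not> same_SE_fun P1 P2"
  shows "\<exists>R. plain_separator R P1 P2"
proof -
  obtain \<Phi> X Y where "\<Phi> \<subseteq> elits P1" and
    "(X, Y) \<in> SE_fun P1 \<Phi> \<and> (X, Y) \<notin> SE_fun P2 \<Phi> \<or> (X, Y) \<in> SE_fun P2 \<Phi> \<and> (X, Y) \<notin> SE_fun P1 \<Phi>"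
    using assms(5,6) unfolding same_SE_fun_def by auto
  then show ?thesis
    using plain_separator_if_SE_fun_differs[OF assms(1-3) refl assms(4)[symmetric] refl assms(5)[symmetric]]
      plain_separator_if_SE_fun_differs[OF assms(1,3,2) refl assms(4) refl assms(5)]
      plain_separator_commute assms(5) by metis
qed

theorem corollary1:
  fixes P1 P2 :: "'a elp"
  assumes "infinite (UNIV :: 'a set)"
    and "wf_elp P1" and "wf_elp P2"
    and "atoms P1 = atoms P2" and "elits P1 = elits P2"
  shows "(strong_ELP_WV_eq P1 P2 \<longleftrightarrow> same_SE_fun P1 P2)
       \<and> (strong_ASP_WV_eq P1 P2 \<longleftrightarrow> same_SE_fun P1 P2)
       \<and> (strong_ELP_CWV_eq P1 P2 \<longleftrightarrow> same_SE_fun P1 P2)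
       \<and> (strong_ASP_CWV_eq P1 P2 \<longleftrightarrow> same_SE_fun P1 P2)"
proof -
  have "same_SE_fun P1 P2 \<Longrightarrow> strong_ELP_WV_eq P1 P2 \<and> strong_ELP_CWV_eq P1 P2"
    unfolding strong_ELP_WV_eq_def strong_ELP_CWV_eq_def
    using union_CWVs_WVs_eq_if_same_SE_fun[OF assms(2-5)] by blast
  moreover have "strong_ELP_WV_eq P1 P2 \<Longrightarrow> strong_ASP_WV_eq P1 P2"
    "strong_ELP_CWV_eq P1 P2 \<Longrightarrow> strong_ASP_CWV_eq P1 P2"
    unfolding strong_ELP_WV_eq_def strong_ASP_WV_eq_def strong_ELP_CWV_eq_def strong_ASP_CWV_eq_def
    by blast+
  moreover have "\<not> same_SE_fun P1 P2 \<Longrightarrow> \<not> strong_ASP_WV_eq P1 P2 \<and> \<not> strong_ASP_CWV_eq P1 P2"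
    using plain_separator_if_not_same_SE_fun[OF assms]
    unfolding strong_ASP_WV_eq_def strong_ASP_CWV_eq_def plain_separator_def by blast
  ultimately show ?thesis by blast
qed

end
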